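(* Let $G_{\tan\cup\sec}$ be the $q$-grammar with master variables $\{x,y\}$, rule $x_j\mapsto q^j(1+x_jx_{j+1})$, $y_j\mapsto q^jx_jy_{j+1}$ ($j\ge0$), and order DIO, with $q$-derivative $D$. Then for $n\ge3$, every term of $D^n(x_0)$ takes exactly one of the following forms: (i) $x_nx_{n-1}^{\,n}$; (ii) $x_1^{\,n}x_0$; (iii) $x_{j+1}^{\,a}x_j^{\,b}$ with $a,b\le n$, $1\le j\le n-2$, $a+b\le n+1$, and $a+b+n+1$ even.
   Context: $\mathbb{K}$ is a commutative ring with unity and characteristic zero, $q$ an indeterminate. For a set $S$ of master variables, $\mathbb{S}=\{s_i:s\in S,\ i\ge0\}$ is a set of non-commuting variables, $F(\mathbb{S})$ the free group on $\mathbb{S}$, $\mathbb{E}=\mathbb{K}[q][F(\mathbb{S})]$ its group algebra. A rule $R$ assigns to each $s_i$ an element of $\mathbb{E}$. The up-arrow $\uparrow$ is the linear map replacing each letter $s_i^{\pm1}$ of a word by $s_{i+1}^{\pm1}$. DIO is the order that stably reorders the letters of a word according to the position of their underlying variable in the sequence $\dots,x_2,y_2,x_1,y_1,x_0,y_0$ (extended linearly). The $q$-derivative of a $q$-grammar $(S,R,\rho)$ is the $\mathbb{K}[q]$-linear map with $D(w_1\cdots w_n)=\sum_{j=1}^n\rho\big(w_1\cdots w_{j-1}R(w_j)\uparrow(w_{j+1}\cdots w_n)\big)$ for letters $w_j$, $D^0=\mathrm{id}$, $D^k=D\circ D^{k-1}$. Writing an element of $\mathbb{E}$ as $\sum_{w\in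 F(\mathbb{S})}a_ww$, its terms are the words $w$ (including possibly the empty word) with $a_w\ne0$. *)

theory Defs
  imports "HOL-Computational_Algebra.Polynomial"
begin

text \<open>Only positive words occur (all rule values are positive), so words are
  lists of letters (elements of the positive submonoid of the free group).\<close>

datatype var = X | Y

type_synonym letter = "var \<times> nat"
type_synonym word = "letter list"

text \<open>Elements of E = K[q][F(S)]: finitely supported coefficient functions
  word => K[q]; a term of f is a word w with f w \<noteq> 0.\<close>
type_synonym 'a elt = "word \<Rightarrow> 'a poly"

definition mono :: "word \<Rightarrow> 'a::comm_ring_1 elt" where
  "mono w = (\<lambda>z. if z = w then 1 else 0)"

definition lin_ext :: "(word \<Rightarrow> 'a::comm_ring_1 elt) \<Rightarrow> 'a elt \<Rightarrow> 'a elt" where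
  "lin_ext \<phi> f = (\<lambda>z. \<Sum>w\<in>{w. f w \<noteq> 0}. f w * \<phi> w z)"

definition up :: "word \<Rightarrow> word" where
  "up w = map (\<lambda>(s, i). (s, Suc i)) w"

text \<open>DIO order: stable reordering along x_2, y_2, x_1, y_1, x_0, y_0.\<close>
definition dio_key :: "letter \<Rightarrow> int" where
  "dio_key l = - 2 * int (snd l) + (if fst l = X then 0 else 1)"

definition rho :: "word \<Rightarrow> word" where
  "rho w = sort_key dio_key w"

definition rho_elt :: "'a::comm_ring_1 elt \<Rightarrow> 'a elt" where
  "rho_elt f = lin_ext (\<lambda>w. mono (rho w)) f"

definition wmul :: "word \<Rightarrow> 'a::comm_ring_1 elt \<Rightarrow> word \<Rightarrow> 'a elt" where
  "wmul u f v = lin_ext (\<lambda>t. mono (u @ t @ v)) f"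

fun rule :: "letter \<Rightarrow> 'a::comm_ring_1 elt" where
  "rule (X, j) = (\<lambda>z. if z = [] \<or> z = [(X, j), (X, Suc j)] then [:0, 1:] ^ j else 0)"
| "rule (Y, j) = (\<lambda>z. if z = [(X, j), (Y, Suc j)] then [:0, 1:] ^ j else 0)"

definition Dword :: "word \<Rightarrow> 'a::comm_ring_1 elt" where
  "Dword w = (\<lambda>z. \<Sum>j<length w.
      rho_elt (wmul (take j w) (rule (w ! j)) (up (drop (Suc j) w))) z)"

definition Dq :: "'a::comm_ring_1 elt \<Rightarrow> 'a elt" where
  "Dq f = lin_ext Dword f"

end

theory Submission
  imports Defs "HOL-Library.Multiset"
begin

(* Only supports are tracked.
   Differentiating a word at one letter deletes that letter or replaces x_i by x_i x_{i+1}, and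
   raises every letter to its right by one. Applied to a sorted block word x_{j+1}^a x_j^b and
   sorted again, this yields a block word whose j is unchanged (letter in the x_j block) or
   increased by one (letter in the x_{j+1} block) and whose length a + b changed by one, whence
   the parity condition. The family of the statement, enlarged by the terms 1 (for n = 1) and
   x_1 (for n = 2), is closed under this operation; the forms (i) and (ii) arise from always
   doubling the first, respectively the last, letter. *)

lemma lin_ext_nonzeroD: "lin_ext \<phi> f z \<noteq> 0 \<Longrightarrow> \<exists>w. f w \<noteq> 0 \<and> \<phi> w z \<noteq> 0"
  unfolding lin_ext_def by (erule sum.not_neutral_contains_not_neutral) auto

lemma mono_nonzeroD: "mono w z \<noteq> 0 \<Longrightarrow> z = w"
  by (simp add: mono_def split: if_splits)

lemma rho_elt_nonzeroD: "rho_elt f z \<noteq> 0 \<Longrightarrow> \<exists>w. f w \<noteq> 0 \<and> z = rho w"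
  unfolding rho_elt_def by (auto dest!: lin_ext_nonzeroD mono_nonzeroD)

lemma wmul_nonzeroD: "wmul u f v z \<noteq> 0 \<Longrightarrow> \<exists>t. f t \<noteq> 0 \<and> z = u @ t @ v"
  unfolding wmul_def by (auto dest!: lin_ext_nonzeroD mono_nonzeroD)

fun rule_words :: "letter \<Rightarrow> word set" where
  "rule_words (X, j) = {[], [(X, j), (X, Suc j)]}"
| "rule_words (Y, j) = {[(X, j), (Y, Suc j)]}"

lemma rule_nonzeroD: "rule l z \<noteq> 0 \<Longrightarrow> z \<in> rule_words l"
  by (cases l rule: rule_words.cases) (auto split: if_splits)

definition successors :: "word \<Rightarrow> word set" where
  "successors w = {rho (u @ r @ up s) | u l s r. w = u @ l # s \<and> r \<in> rule_words l}"

lemma Dword_nonzeroD: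
  assumes "Dword w z \<noteq> 0"
  shows "z \<in> successors w"
proof -
  obtain k r where k: "k < length w" and "r \<in> rule_words (w ! k)"
    and "z = rho (take k w @ r @ up (drop (Suc k) w))"
    using assms unfolding Dword_def
    by (auto elim!: sum.not_neutral_contains_not_neutral
        dest!: rho_elt_nonzeroD wmul_nonzeroD rule_nonzeroD)
  moreover have "w = take k w @ w ! k # drop (Suc k) w"
    using k by (simp add: id_take_nth_drop)
  ultimately show ?thesis
    unfolding successors_def by blast
qed

lemma Dq_nonzeroD: "Dq f z \<noteq> 0 \<Longrightarrow> \<exists>w. f w \<noteq> 0 \<and> z \<in> successors w"
  unfolding Dq_def by (auto dest!: lin_ext_nonzeroD Dword_nonzeroD)

abbreviation block_word :: "nat \<Rightarrow> nat \<Rightarrow> nat \<Rightarrow> word" where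
  "block_word j a b \<equiv> replicate a (X, Suc j) @ replicate b (X, j)"

lemma inj_dio_key: "inj dio_key"
proof (rule injI)
  fix l l' :: letter
  assume "dio_key l = dio_key l'"
  moreover obtain s i s' i' where "l = (s, i)" "l' = (s', i')"
    by fastforce
  ultimately show "l = l'"
    by (cases s; cases s'; simp add: dio_key_def; presburger)
qed

lemma rho_eq_block_word:
  assumes "mset w = mset (block_word j a b)"
  shows "rho w = block_word j a b"
  unfolding rho_def using assms inj_on_subset[OF inj_dio_key subset_UNIV]
  by (rule sort_key_inj_key_eq) (auto simp: sorted_append dio_key_def)

lemma split_replicate_append:
  assumes "u @ l # s = replicate a x @ replicate b y"
  shows "(\<exists>i c. a = i + 1 + c \<and> u = replicate i x \<and> l = x \<and> s = replicate c x @ replicate b y)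
       \<or> (\<exists>i c. b = i + 1 + c \<and> u = replicate a x @ replicate i y \<and> l = y \<and> s = replicate c y)"
proof -
  let ?w = "replicate a x @ replicate b y"
  define i where "i = length u"
  have u: "u = take i ?w" and l: "l = ?w ! i" and s: "s = drop (Suc i) ?w"
    unfolding i_def assms[symmetric] by simp_all
  have "i < a + b"
    using arg_cong[OF assms, of length] by (simp add: i_def)
  then consider "i < a" | "a \<le> i" "i < a + b"
    by linarith
  then show ?thesis
  proof cases
    case 1
    then have "a = i + 1 + (a - Suc i)" "u = replicate i x" "l = x"
      "s = replicate (a - Suc i) x @ replicate b y"
      unfolding u l s by (simp_all add: nth_append)
    then show ?thesis
      by blast
  next
    case 2
    then have "b = (i - a) + 1 + (b - Suc (i - a))" "u = replicate a x @ replicate (i - a) y"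
      "l = y" "s = replicate (b - Suc (i - a)) y"
      unfolding u l s by (simp_all add: nth_append)
    then show ?thesis
      by blast
  qed
qed

lemma successors_block_word:
  assumes "v \<in> successors (block_word j a b)"
  obtains (first) i c where "a = i + 1 + c"
      and "v = block_word (Suc j) c (i + b) \<or> v = block_word (Suc j) (Suc c) (Suc (i + b))"
    | (second) i c where "b = i + 1 + c"
      and "v = block_word j (a + c) i \<or> v = block_word j (Suc (a + c)) (Suc i)"
proof -
  obtain u l s r where w: "block_word j a b = u @ l # s" and r: "r \<in> rule_words l"
    and v: "v = rho (u @ r @ up s)"
    using assms unfolding successors_def by blast
  from split_replicate_append[OF w[symmetric]] show thesis
  proof (elim disjE exE conjE)
    fix i c
    assume a: "a = i + 1 + c" and u: "u = replicate i (X, Suc j)" and l: "l = (X, Suc j)"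
      and s: "s = replicate c (X, Suc j) @ replicate b (X, j)"
    have "rho (u @ up s) = block_word (Suc j) c (i + b)"
      "rho (u @ [(X, Suc j), (X, Suc (Suc j))] @ up s) = block_word (Suc j) (Suc c) (Suc (i + b))"
      unfolding u s by (rule rho_eq_block_word, simp add: up_def multiset_eq_iff)+
    with r v l have "v = block_word (Suc j) c (i + b) \<or> v = block_word (Suc j) (Suc c) (Suc (i + b))"
      by auto
    with a show thesis
      by (rule first)
  next
    fix i c
    assume b: "b = i + 1 + c" and u: "u = replicate a (X, Suc j) @ replicate i (X, j)"
      and l: "l = (X, j)" and s: "s = replicate c (X, j)"
    have "rho (u @ up s) = block_word j (a + c) i"
      "rho (u @ [(X, j), (X, Suc j)] @ up s) = block_word j (Suc (a + c)) (Suc i)"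
      unfolding u s by (rule rho_eq_block_word, simp add: up_def multiset_eq_iff)+
    with r v l have "v = block_word j (a + c) i \<or> v = block_word j (Suc (a + c)) (Suc i)"
      by auto
    with b show thesis
      by (rule second)
  qed
qed

definition tan_sec_terms :: "nat \<Rightarrow> word set" where
  "tan_sec_terms n =
     {[(X, n)] @ replicate n (X, n - 1), replicate n (X, 1) @ [(X, 0)]}
     \<union> {block_word j a b | j a b. a \<le> n \<and> b \<le> n \<and> 1 \<le> j \<and> j \<le> n - 2
          \<and> a + b \<le> n + 1 \<and> even (a + b + n + 1)}
     \<union> (if n = 1 then {[]} else if n = 2 then {[(X, 1)]} else {})"

lemma block_word_in_tan_sec_terms:
  "a \<le> n \<Longrightarrow> b \<le> n \<Longrightarrow> 1 \<le> j \<Longrightarrow> j \<le> n - 2 \<Longrightarrow> a + b \<le> n + 1 \<Longrightarrow> even (a + b + n + 1)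
   \<Longrightarrow> block_word j a b \<in> tan_sec_terms n"
  unfolding tan_sec_terms_def by blast

lemma successors_middle_term:
  assumes "a \<le> n" "b \<le> n" "1 \<le> j" "j \<le> n - 2" "a + b \<le> n + 1" "even (a + b + n + 1)"
    and "v \<in> successors (block_word j a b)"
  shows "v \<in> tan_sec_terms (Suc n)"
  using assms(7)
  by (cases rule: successors_block_word)
    (use assms(1-6) in \<open>auto intro!: block_word_in_tan_sec_terms simp del: replicate_Suc\<close>)

lemma successors_top_term:
  assumes "v \<in> successors (block_word m 1 (Suc m))"
  shows "v \<in> tan_sec_terms (Suc (Suc m))"
proof (cases "m = 0")
  case True
  with assms show ?thesis
    by (cases rule: successors_block_word) (auto simp: tan_sec_terms_def)
next
  case False
  from assms show ?thesis
  proof (cases rule: successors_block_word)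
    case (first i c)
    then have "v = block_word m (Suc m) 0 \<or> v = [(X, Suc (Suc m))] @ replicate (Suc (Suc m)) (X, Suc m)"
      by auto
    \<comment> \<open>the pure power x_{m+1}^{m+1} lies in the middle family only when read with j = m\<close>
    moreover have "block_word m (Suc m) 0 \<in> tan_sec_terms (Suc (Suc m))"
      using False by (intro block_word_in_tan_sec_terms) auto
    ultimately show ?thesis
      by (auto simp: tan_sec_terms_def)
  next
    case (second i c)
    with False show ?thesis
      by (auto intro!: block_word_in_tan_sec_terms simp del: replicate_Suc)
  qed
qed

lemma successors_bottom_term:
  assumes "v \<in> successors (block_word 0 n 1)"
  shows "v \<in> tan_sec_terms (Suc n)"
proof (cases "n \<le> 1")
  case True
  with assms show ?thesis
    by (cases rule: successors_block_word) (auto simp: tan_sec_terms_def le_Suc_eq)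
next
  case False
  from assms show ?thesis
  proof (cases rule: successors_block_word)
    case (first i c)
    with False show ?thesis
      by (auto intro!: block_word_in_tan_sec_terms simp del: replicate_Suc)
  next
    case (second i c)
    then have "v = block_word 1 0 n \<or> v = replicate (Suc n) (X, 1) @ [(X, 0)]"
      by auto
    moreover have "block_word 1 0 n \<in> tan_sec_terms (Suc n)"
      using False by (intro block_word_in_tan_sec_terms) auto
    ultimately show ?thesis
      by (auto simp: tan_sec_terms_def)
  qed
qed

lemma successors_tan_sec_terms:
  assumes "w \<in> tan_sec_terms n" and "v \<in> successors w"
  shows "v \<in> tan_sec_terms (Suc n)"
proof -
  consider (top) m where "n = Suc m" "w = block_word m 1 (Suc m)"
    | (bottom) "w = block_word 0 n 1"
    | (middle) j a b where "w = block_word j a b" "a \<le> n" "b \<le> n" "1 \<le> j" "j \<le> n - 2"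
        "a + b \<le> n + 1" "even (a + b + n + 1)"
    | (one) "w = []"
    | (two) "n = 2" "w = block_word 0 1 0"
    using assms(1) unfolding tan_sec_terms_def by (cases n) (auto split: if_splits)
  then show ?thesis
  proof cases
    case top
    with assms(2) show ?thesis
      by (simp add: successors_top_term)
  next
    case bottom
    with assms(2) show ?thesis
      by (simp add: successors_bottom_term)
  next
    case middle
    with assms(2) show ?thesis
      by (simp add: successors_middle_term)
  next
    case one
    with assms(2) show ?thesis
      by (simp add: successors_def)
  next
    case two
    with assms(2) have "v \<in> successors (block_word 0 1 0)"
      by simp
    then have "v = block_word 1 0 0 \<or> v = block_word 1 1 1"
      by (cases rule: successors_block_word) auto
    with two(1) show ?thesis
      by (elim disjE; hypsubst; intro block_word_in_tan_sec_terms; simp)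
  qed
qed

lemma iterated_derivative_terms:
  "(Dq ^^ n) (mono [(X, 0)] :: 'a::comm_ring_1 elt) w \<noteq> 0 \<Longrightarrow> w \<in> tan_sec_terms n"
proof (induction n arbitrary: w)
  case 0
  then show ?case
    by (auto simp: mono_def tan_sec_terms_def split: if_splits)
next
  case (Suc n)
  then obtain w' where "(Dq ^^ n) (mono [(X, 0)] :: 'a elt) w' \<noteq> 0" "w \<in> successors w'"
    by (auto dest: Dq_nonzeroD)
  then show ?case
    using Suc.IH successors_tan_sec_terms by blast
qed

theorem proposition3p8:
  fixes n :: nat and w :: word
  assumes "n \<ge> 3"
    and "(Dq ^^ n) (mono [(X, 0)] :: ('a::{comm_ring_1, ring_char_0}) elt) w \<noteq> 0"
  shows "let P1 = (w = [(X, n)] @ replicate n (X, n - 1));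
             P2 = (w = replicate n (X, 1) @ [(X, 0)]);
             P3 = (\<exists>j a b. w = replicate a (X, Suc j) @ replicate b (X, j)
                     \<and> a \<le> n \<and> b \<le> n \<and> 1 \<le> j \<and> j \<le> n - 2
                     \<and> a + b \<le> n + 1 \<and> even (a + b + n + 1))
         in (P1 \<and> \<not> P2 \<and> \<not> P3) \<or> (\<not> P1 \<and> P2 \<and> \<not> P3) \<or> (\<not> P1 \<and> \<not> P2 \<and> P3)"
proof -
  let ?top = "[(X, n)] @ replicate n (X, n - 1)" and ?bottom = "replicate n (X, 1) @ [(X, 0)]"
  have "w \<in> tan_sec_terms n"
    using assms(2) by (rule iterated_derivative_terms)
  then have forms: "w = ?top \<or> w = ?bottom
      \<or> (\<exists>j a b. w = block_word j a b \<and> a \<le> n \<and> b \<le> n \<and> 1 \<le> j \<and> j \<le> n - 2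
             \<and> a + b \<le> n + 1 \<and> even (a + b + n + 1))"
    using assms(1) unfolding tan_sec_terms_def by simp
  have "(X, n) \<in> set ?top" "(X, 0) \<notin> set ?top" "(X, 0) \<in> set ?bottom"
    using assms(1) by auto
  moreover have "(X, 0) \<notin> set (block_word j a b) \<and> (X, n) \<notin> set (block_word j a b)"
    if "1 \<le> j" "j \<le> n - 2" for j a b
    using that assms(1) by auto
  ultimately show ?thesis
    unfolding Let_def using forms by metis
qed

end
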